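(* Let $G$ be a finite group, $\xi$ a linear character of $G$, $\varepsilon$ the trivial or sign character of $S_2$, and $\xi\otimes\varepsilon$ the linear character $(g,g;\sigma)\mapsto\xi(g)\varepsilon(\sigma)$ of $HG_1=\{(g,g;\sigma)\mid g\in G,\sigma\in S_2\}\subset SG_2=G\wr S_2$. For $z\in SG_2$ put $K_z=\sum_{x,y\in HG_1}(\xi\otimes\varepsilon)(xy)\,xzy\in\mathbb{C}SG_2$. Then for $g\in G$ and $\sigma\in S_2$, $K_{(1,g;\sigma)}=0$ if and only if $\xi(g)=-1$ and $C_g=C_{g^{-1}}$.
   Context: $G\wr S_2=\{(g_1,g_2;\sigma)\}$ with multiplication $(g_1,g_2;\sigma)(h_1,h_2;\tau)=(g_1h_{\sigma^{-1}(1)},g_2h_{\sigma^{-1}(2)};\sigma\tau)$. $C_g$ denotes the conjugacy class of $g$ in $G$. *)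

theory Defs
  imports Complex_Main "HOL-Algebra.Group"
begin

(* Elements of the wreath product G wr S_2 are triples (g1, g2, s), where the
   permutation s :: bool encodes an element of S_2: False = identity, True = swap. *)

definition wr_carrier :: "('a, 'b) monoid_scheme \<Rightarrow> ('a \<times> 'a \<times> bool) set" where
  "wr_carrier G = carrier G \<times> carrier G \<times> (UNIV :: bool set)"

(* (g1,g2;s)(h1,h2;t) = (g1 h_{s^-1(1)}, g2 h_{s^-1(2)}; s t) *)
definition wr_mult :: "('a, 'b) monoid_scheme \<Rightarrow> 'a \<times> 'a \<times> bool \<Rightarrow> 'a \<times> 'a \<times> bool \<Rightarrow> 'a \<times> 'a \<times> bool" where
  "wr_mult G x y = (case x of (g1, g2, s) \<Rightarrow> case y of (h1, h2, t) \<Rightarrow>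
     (if s then (g1 \<otimes>\<^bsub>G\<^esub> h2, g2 \<otimes>\<^bsub>G\<^esub> h1, s \<noteq> t)
           else (g1 \<otimes>\<^bsub>G\<^esub> h1, g2 \<otimes>\<^bsub>G\<^esub> h2, t)))"

definition HG1 :: "('a, 'b) monoid_scheme \<Rightarrow> ('a \<times> 'a \<times> bool) set" where
  "HG1 G = {(g, g, s) | g s. g \<in> carrier G}"

definition tens_char :: "('a \<Rightarrow> complex) \<Rightarrow> (bool \<Rightarrow> complex) \<Rightarrow> 'a \<times> 'a \<times> bool \<Rightarrow> complex" where
  "tens_char xi eps x = xi (fst x) * eps (snd (snd x))"

(* K_z = \<Sum>_{x,y \<in> HG_1} (xi (x) eps)(xy) xzy  as an element of the group algebra C[SG_2],
   represented by its coefficient function SG_2 \<rightarrow> C. *)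
definition K_elem :: "('a, 'b) monoid_scheme \<Rightarrow> ('a \<Rightarrow> complex) \<Rightarrow> (bool \<Rightarrow> complex)
    \<Rightarrow> 'a \<times> 'a \<times> bool \<Rightarrow> ('a \<times> 'a \<times> bool \<Rightarrow> complex)" where
  "K_elem G xi eps z = (\<lambda>w. \<Sum>p \<in> HG1 G \<times> HG1 G.
      if wr_mult G (wr_mult G (fst p) z) (snd p) = w
      then tens_char xi eps (wr_mult G (fst p) (snd p)) else 0)"

definition conj_class :: "('a, 'b) monoid_scheme \<Rightarrow> 'a \<Rightarrow> 'a set" where
  "conj_class G g = {h \<otimes>\<^bsub>G\<^esub> g \<otimes>\<^bsub>G\<^esub> inv\<^bsub>G\<^esub> h | h. h \<in> carrier G}"

definition linear_char :: "('a, 'b) monoid_scheme \<Rightarrow> ('a \<Rightarrow> complex) \<Rightarrow> bool" where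
  "linear_char G xi \<longleftrightarrow> (\<forall>x\<in>carrier G. xi x \<noteq> 0) \<and>
     (\<forall>x\<in>carrier G. \<forall>y\<in>carrier G. xi (x \<otimes>\<^bsub>G\<^esub> y) = xi x * xi y)"

end

theory Submission
  imports Defs
begin

text \<open>
  Index the summands of \<open>K\<^sub>z\<close>, \<open>z = (1, g; s)\<close>, by \<open>x = (a, a; \<sigma>)\<close> and \<open>y = (b, b; \<tau>)\<close>.
  A summand contributes to the coefficient of \<open>z\<close> either with \<open>\<sigma> = \<tau> = id\<close> and \<open>ab = 1\<close>, giving
  \<open>\<xi>(1) = 1\<close>, or with \<open>\<sigma> = \<tau> = (12)\<close>, \<open>ab = g\<close> and \<open>agb = 1\<close>, giving \<open>\<xi>(g)\<close>. The second kind
  forces \<open>aga\<inverse> = g\<inverse>\<close>, hence \<open>\<xi>(g)\<^sup>2 = 1\<close>. So unless \<open>\<xi>(g) = -1\<close> and \<open>g\<close> is conjugate to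
  \<open>g\<inverse>\<close>, that coefficient is a positive integer. Conversely, if \<open>a\<^sub>0ga\<^sub>0\<inverse> = g\<inverse>\<close>, then
  \<open>c = (a\<^sub>0, a\<^sub>0; (12))\<close> and \<open>d = (a\<^sub>0\<inverse>g, a\<^sub>0\<inverse>g; (12))\<close> satisfy \<open>czd = z\<close>, so the permutation
  \<open>(x, y) \<mapsto> (xc, dy)\<close> of \<open>HG\<^sub>1 \<times> HG\<^sub>1\<close> fixes \<open>xzy\<close> and multiplies \<open>(\<xi> \<otimes> \<epsilon>)(xy)\<close> by
  \<open>(\<xi> \<otimes> \<epsilon>)(cd) = \<xi>(g)\<close>; thus \<open>K\<^sub>z = \<xi>(g) K\<^sub>z\<close>, which forces \<open>K\<^sub>z = 0\<close> when \<open>\<xi>(g) = -1\<close>.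
\<close>

lemma (in group) conj_class_of_conjugate:
  assumes "a \<in> carrier G" and "g \<in> carrier G"
  shows "conj_class G (a \<otimes> g \<otimes> inv a) = conj_class G g"
proof
  show "conj_class G (a \<otimes> g \<otimes> inv a) \<subseteq> conj_class G g"
  proof
    fix x assume "x \<in> conj_class G (a \<otimes> g \<otimes> inv a)"
    then obtain h where h: "h \<in> carrier G" "x = h \<otimes> (a \<otimes> g \<otimes> inv a) \<otimes> inv h"
      unfolding conj_class_def by auto
    then have "x = (h \<otimes> a) \<otimes> g \<otimes> inv (h \<otimes> a)"
      using assms by (simp add: m_assoc inv_mult_group)
    then show "x \<in> conj_class G g"
      unfolding conj_class_def using h assms by blast
  qed
  show "conj_class G g \<subseteq> conj_class G (a \<otimes> g \<otimes> inv a)"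
  proof
    fix x assume "x \<in> conj_class G g"
    then obtain h where h: "h \<in> carrier G" "x = h \<otimes> g \<otimes> inv h"
      unfolding conj_class_def by auto
    then have "x = (h \<otimes> inv a) \<otimes> (a \<otimes> g \<otimes> inv a) \<otimes> inv (h \<otimes> inv a)"
      using assms by (simp add: m_assoc inv_mult_group flip: m_assoc[of "inv a" a])
    then show "x \<in> conj_class G (a \<otimes> g \<otimes> inv a)"
      unfolding conj_class_def using h assms by blast
  qed
qed

lemma (in group) conj_class_eq_iff_conjugate:
  assumes "g \<in> carrier G" and "h \<in> carrier G"
  shows "conj_class G g = conj_class G h \<longleftrightarrow> (\<exists>a\<in>carrier G. a \<otimes> g \<otimes> inv a = h)"
proof
  assume eq: "conj_class G g = conj_class G h"
  have "g \<in> conj_class G g"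
    unfolding conj_class_def using assms by (auto intro!: exI[of _ \<one>])
  then have "g \<in> conj_class G h"
    by (simp only: eq)
  then obtain c where c: "c \<in> carrier G" "g = c \<otimes> h \<otimes> inv c"
    unfolding conj_class_def by auto
  then have "inv c \<otimes> g \<otimes> inv (inv c) = h"
    using assms by (simp add: m_assoc flip: m_assoc[of "inv c" c])
  then show "\<exists>a\<in>carrier G. a \<otimes> g \<otimes> inv a = h"
    using c(1) by blast
next
  assume "\<exists>a\<in>carrier G. a \<otimes> g \<otimes> inv a = h"
  then obtain a where "a \<in> carrier G" "a \<otimes> g \<otimes> inv a = h"
    by blast
  then show "conj_class G g = conj_class G h"
    using conj_class_of_conjugate assms(1) by metis
qed

lemma (in group) linear_char_one:
  assumes "linear_char G xi"
  shows "xi \<one> = 1"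
proof -
  have "xi \<one> = xi \<one> * xi \<one>" and "xi \<one> \<noteq> 0"
    using assms unfolding linear_char_def by (metis one_closed r_one)+
  then show ?thesis by simp
qed

lemma (in group) linear_char_inv:
  assumes "linear_char G xi" and "g \<in> carrier G"
  shows "xi (inv g) * xi g = 1"
  using assms linear_char_one[OF assms(1)] unfolding linear_char_def
  by (metis inv_closed l_inv)

lemma (in group) linear_char_conj:
  assumes "linear_char G xi" and "a \<in> carrier G" and "g \<in> carrier G"
  shows "xi (a \<otimes> g \<otimes> inv a) = xi g"
proof -
  have "xi (a \<otimes> g \<otimes> inv a) = xi g * (xi (inv a) * xi a)"
    using assms unfolding linear_char_def by (simp add: algebra_simps)
  then show ?thesis
    using linear_char_inv[OF assms(1,2)] by simp
qed

lemma (in group) linear_char_sign_if_conj_inv: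
  assumes "linear_char G xi" and "g \<in> carrier G"
    and "conj_class G g = conj_class G (inv g)"
  shows "xi g = 1 \<or> xi g = -1"
proof -
  obtain a where "a \<in> carrier G" "a \<otimes> g \<otimes> inv a = inv g"
    using assms(2,3) conj_class_eq_iff_conjugate by auto
  then have "xi (inv g) = xi g"
    using linear_char_conj assms(1,2) by metis
  then have "(xi g - 1) * (xi g + 1) = 0"
    using linear_char_inv[OF assms(1,2)] by (simp add: algebra_simps power2_eq_square)
  then show ?thesis
    by (auto simp: eq_neg_iff_add_eq_0)
qed

lemma wr_mult_diag:
  "wr_mult G (a, a, \<sigma>) (b, b, \<tau>) = (a \<otimes>\<^bsub>G\<^esub> b, a \<otimes>\<^bsub>G\<^esub> b, \<sigma> \<noteq> \<tau>)"
  by (cases \<sigma>; cases \<tau>) (simp_all add: wr_mult_def)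

lemma (in group) wr_mult_diag_left_right:
  assumes "a \<in> carrier G" and "b \<in> carrier G"
  shows "wr_mult G (wr_mult G (a, a, \<sigma>) (\<one>, g, s)) (b, b, \<tau>) =
    (if \<sigma> then a \<otimes> g \<otimes> b else a \<otimes> b, if \<sigma> then a \<otimes> b else a \<otimes> g \<otimes> b, (\<sigma> \<noteq> s) \<noteq> \<tau>)"
  using assms by (cases \<sigma>; cases s; cases \<tau>) (simp_all add: wr_mult_def)

lemma (in group) wr_mult_diag_left_right_eq_self_iff:
  assumes "a \<in> carrier G" and "b \<in> carrier G"
  shows "wr_mult G (wr_mult G (a, a, \<sigma>) (\<one>, g, s)) (b, b, \<tau>) = (\<one>, g, s) \<longleftrightarrow>
    (\<not> \<sigma> \<and> \<not> \<tau> \<and> a \<otimes> b = \<one> \<and> a \<otimes> g \<otimes> b = g) \<or> (\<sigma> \<and> \<tau> \<and> a \<otimes> b = g \<and> a \<otimes> g \<otimes> b = \<one>)"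
  using assms by (cases \<sigma>; cases \<tau>; cases s) (auto simp: wr_mult_diag_left_right)

lemma K_elem_as_sum_over_parameters:
  "K_elem G xi eps z w = (\<Sum>(a, \<sigma>, b, \<tau>) \<in> carrier G \<times> UNIV \<times> carrier G \<times> UNIV.
     if wr_mult G (wr_mult G (a, a, \<sigma>) z) (b, b, \<tau>) = w
     then xi (a \<otimes>\<^bsub>G\<^esub> b) * eps (\<sigma> \<noteq> \<tau>) else 0)"
  unfolding K_elem_def
proof (rule sum.reindex_cong)
  let ?diag = "\<lambda>(a :: 'a, \<sigma> :: bool, b :: 'a, \<tau> :: bool). ((a, a, \<sigma>), (b, b, \<tau>))"
  show "inj_on ?diag (carrier G \<times> UNIV \<times> carrier G \<times> UNIV)"
    by (auto intro: inj_onI)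
  have "HG1 G = (\<lambda>(a, \<sigma>). (a, a, \<sigma>)) ` (carrier G \<times> UNIV)"
    unfolding HG1_def by auto
  then show "HG1 G \<times> HG1 G = ?diag ` (carrier G \<times> UNIV \<times> carrier G \<times> UNIV)"
    by (auto simp: image_iff)
  fix q :: "'a \<times> bool \<times> 'a \<times> bool"
  obtain a \<sigma> b \<tau> where "q = (a, \<sigma>, b, \<tau>)"
    by (cases q) auto
  then show "(if wr_mult G (wr_mult G (fst (?diag q)) z) (snd (?diag q)) = w
      then tens_char xi eps (wr_mult G (fst (?diag q)) (snd (?diag q))) else 0) =
    (case q of (a, \<sigma>, b, \<tau>) \<Rightarrow> if wr_mult G (wr_mult G (a, a, \<sigma>) z) (b, b, \<tau>) = w
      then xi (a \<otimes>\<^bsub>G\<^esub> b) * eps (\<sigma> \<noteq> \<tau>) else 0)"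
    by (simp add: tens_char_def wr_mult_diag)
qed

lemma (in group) K_elem_coeff_self_nonzero:
  assumes "finite (carrier G)" and "linear_char G xi" and "eps False = 1"
    and g: "g \<in> carrier G"
    and not_sign_inv: "\<not> (xi g = -1 \<and> conj_class G g = conj_class G (inv g))"
  shows "K_elem G xi eps (\<one>, g, s) (\<one>, g, s) \<noteq> 0"
proof -
  let ?P = "carrier G \<times> (UNIV :: bool set) \<times> carrier G \<times> (UNIV :: bool set)"
  define t where "t = (\<lambda>(a, \<sigma>, b, \<tau>).
     if wr_mult G (wr_mult G (a, a, \<sigma>) (\<one>, g, s)) (b, b, \<tau>) = (\<one>, g, s)
     then xi (a \<otimes> b) * eps (\<sigma> \<noteq> \<tau>) else 0)"
  have term_0_or_1: "t p = 0 \<or> t p = 1" if "p \<in> ?P" for p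
  proof -
    obtain a \<sigma> b \<tau> where p: "p = (a, \<sigma>, b, \<tau>)" and ab: "a \<in> carrier G" "b \<in> carrier G"
      using \<open>p \<in> ?P\<close> by auto
    show ?thesis
    proof (cases "wr_mult G (wr_mult G (a, a, \<sigma>) (\<one>, g, s)) (b, b, \<tau>) = (\<one>, g, s)")
      case False
      then show ?thesis
        unfolding t_def p by simp
    next
      case stabilizes: True
      then consider "\<not> \<sigma>" "\<not> \<tau>" "a \<otimes> b = \<one>" | "\<sigma>" "\<tau>" "a \<otimes> b = g" "a \<otimes> g \<otimes> b = \<one>"
        using wr_mult_diag_left_right_eq_self_iff[OF ab] by blast
      then show ?thesis
      proof cases
        case 1
        then show ?thesis
          unfolding t_def p using stabilizes assms(3) linear_char_one[OF assms(2)] by simp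
      next
        case 2
        then have "b = inv a \<otimes> g"
          using ab g by (metis inv_solve_left)
        with 2 have "a \<otimes> g \<otimes> inv a = inv g"
          using ab g by (metis inv_closed inv_equality m_assoc m_closed)
        then have "conj_class G g = conj_class G (inv g)"
          using conj_class_eq_iff_conjugate ab g by auto
        then have "xi g = 1"
          using linear_char_sign_if_conj_inv[OF assms(2) g] not_sign_inv by auto
        with 2 show ?thesis
          unfolding t_def p using stabilizes assms(3) by simp
      qed
    qed
  qed
  have identity_term: "t (\<one>, False, \<one>, False) = 1"
    unfolding t_def using g assms(3) linear_char_one[OF assms(2)]
    by (simp add: wr_mult_diag_left_right)
  have "Re (t (\<one>, False, \<one>, False)) \<le> (\<Sum>p\<in>?P. Re (t p))"
  proof (rule member_le_sum)
    show "(\<one>, False, \<one>, False) \<in> ?P" by simp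
    show "finite ?P" using assms(1) by simp
    show "0 \<le> Re (t p)" if "p \<in> ?P - {(\<one>, False, \<one>, False)}" for p
      using term_0_or_1[of p] that by auto
  qed
  then have "1 \<le> Re (\<Sum>p\<in>?P. t p)"
    using identity_term by (simp add: Re_sum)
  then have "(\<Sum>p\<in>?P. t p) \<noteq> 0"
    by (auto simp del: Re_sum)
  then show ?thesis
    unfolding K_elem_as_sum_over_parameters t_def .
qed

lemma (in group) K_elem_vanishes_if_conj_inv:
  assumes "finite (carrier G)" and "linear_char G xi"
    and g: "g \<in> carrier G" and "xi g = -1"
    and a0: "a0 \<in> carrier G" and conj: "a0 \<otimes> g \<otimes> inv a0 = inv g"
  shows "K_elem G xi eps (\<one>, g, s) = (\<lambda>_. 0)"
proof
  fix w
  let ?P = "carrier G \<times> (UNIV :: bool set) \<times> carrier G \<times> (UNIV :: bool set)"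
  define b0 where "b0 = inv a0 \<otimes> g"
  have b0: "b0 \<in> carrier G" and "a0 \<otimes> b0 = g" and "a0 \<otimes> g \<otimes> b0 = \<one>"
    unfolding b0_def using a0 g conj by (simp_all add: m_assoc[symmetric])
  define t where "t = (\<lambda>(a, \<sigma>, b, \<tau>).
     if wr_mult G (wr_mult G (a, a, \<sigma>) (\<one>, g, s)) (b, b, \<tau>) = w
     then xi (a \<otimes> b) * eps (\<sigma> \<noteq> \<tau>) else 0)"
  \<comment> \<open>\<open>(x, y) \<mapsto> (xc, dy)\<close> in the parameters of \<open>x\<close> and \<open>y\<close>\<close>
  define \<phi> where "\<phi> = (\<lambda>(a, \<sigma>, b, \<tau>). (a \<otimes> a0, \<not> \<sigma>, b0 \<otimes> b, \<not> \<tau>))"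
  have fin: "finite ?P"
    using assms(1) by simp
  have \<phi>_inj: "inj_on \<phi> ?P"
    unfolding \<phi>_def using a0 b0 by (auto intro!: inj_onI)
  have \<phi>_perm: "\<phi> ` ?P = ?P"
    by (rule endo_inj_surj[OF fin _ \<phi>_inj]) (auto simp: \<phi>_def a0 b0)
  have t_\<phi>: "t (\<phi> p) = - t p" if "p \<in> ?P" for p
  proof -
    obtain a \<sigma> b \<tau> where p: "p = (a, \<sigma>, b, \<tau>)" and ab: "a \<in> carrier G" "b \<in> carrier G"
      using \<open>p \<in> ?P\<close> by auto
    have "a \<otimes> a0 \<otimes> g \<otimes> (b0 \<otimes> b) = a \<otimes> b" and "a \<otimes> a0 \<otimes> (b0 \<otimes> b) = a \<otimes> g \<otimes> b"
      using ab a0 b0 g \<open>a0 \<otimes> b0 = g\<close> \<open>a0 \<otimes> g \<otimes> b0 = \<one>\<close> by (metis m_assoc m_closed r_one)+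
    moreover have "xi (a \<otimes> g \<otimes> b) = - xi (a \<otimes> b)"
      using assms(2,4) ab g unfolding linear_char_def by simp
    ultimately show ?thesis
      unfolding t_def \<phi>_def p using ab a0 b0
      by (cases s; cases \<tau>) (simp_all add: wr_mult_diag_left_right m_assoc)
  qed
  have "sum t ?P = sum t (\<phi> ` ?P)"
    using \<phi>_perm by simp
  also have "\<dots> = sum (t \<circ> \<phi>) ?P"
    by (rule sum.reindex[OF \<phi>_inj])
  also have "\<dots> = - sum t ?P"
    using t_\<phi> by (simp add: sum_negf)
  finally show "K_elem G xi eps (\<one>, g, s) w = 0"
    unfolding K_elem_as_sum_over_parameters t_def by simp
qed

theorem proposition3p6:
  fixes G :: "('a, 'b) monoid_scheme" and xi :: "'a \<Rightarrow> complex" and eps :: "bool \<Rightarrow> complex"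
    and g :: 'a and s :: bool
  assumes "group G" and "finite (carrier G)"
    and "linear_char G xi"
    and "eps = (\<lambda>_. 1) \<or> eps = (\<lambda>t. if t then -1 else 1)"
    and "g \<in> carrier G"
  shows "K_elem G xi eps (\<one>\<^bsub>G\<^esub>, g, s) = (\<lambda>_. 0) \<longleftrightarrow>
           (xi g = -1 \<and> conj_class G g = conj_class G (inv\<^bsub>G\<^esub> g))"
proof -
  interpret group G by fact
  have "eps False = 1"
    using assms(4) by auto
  show ?thesis
  proof
    assume "K_elem G xi eps (\<one>\<^bsub>G\<^esub>, g, s) = (\<lambda>_. 0)"
    then show "xi g = -1 \<and> conj_class G g = conj_class G (inv\<^bsub>G\<^esub> g)"
      using K_elem_coeff_self_nonzero[of xi eps g s] assms(2,3,5) \<open>eps False = 1\<close> by metis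
  next
    assume sign_inv: "xi g = -1 \<and> conj_class G g = conj_class G (inv\<^bsub>G\<^esub> g)"
    then obtain a0 where "a0 \<in> carrier G" "a0 \<otimes>\<^bsub>G\<^esub> g \<otimes>\<^bsub>G\<^esub> inv\<^bsub>G\<^esub> a0 = inv\<^bsub>G\<^esub> g"
      using conj_class_eq_iff_conjugate assms(5) by blast
    then show "K_elem G xi eps (\<one>\<^bsub>G\<^esub>, g, s) = (\<lambda>_. 0)"
      using K_elem_vanishes_if_conj_inv[OF assms(2,3,5)] sign_inv by blast
  qed
qed

end
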